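(* Let $c,k$ be positive integers and let $Z$ be a multigraph in which every edge has multiplicity less than $c$. Let $\{A,B\}$ be a partition of $V(Z)$ such that each vertex of $A$ has edge-degree at least $k$ in $Z$, $B$ is an independent set of $Z$, and each vertex of $B$ has at least $2$ distinct neighbors in $Z$. Then $Z$ has a cluster collection $\mathcal{C}$ such that each vertex of $A$ belongs to exactly one cluster of $\mathcal{C}$, no cluster of $\mathcal{C}$ has more than $k+1$ vertices, and each vertex of $Z/\mathcal{C}$ has edge-degree at least $k/c$.
   Context: Graphs are finite multigraphs without loops; when contracting edges, multiplicities of parallel edges created are summed and loops are deleted. The edge-degree of a vertex is the number of edges (with multiplicity) incident to it. A cluster collection of $Z$ is a nonempty collection $\mathcal{C}$ of pairwise disjoint nonempty vertex sets each inducing a connected subgraph of $Z$; $Z/\mathcal{C}$ is the multigraph obtained from $Z[\bigcup\mathcal{C}]$ by contracting all edges inside each cluster of $\mathcal{C}$. *)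

theory Defs
  imports Complex_Main
begin

text \<open>A finite loopless multigraph on vertex set V, given by a symmetric
  multiplicity function m (number of parallel edges between two vertices).\<close>
definition multigraph :: "'a set \<Rightarrow> ('a \<Rightarrow> 'a \<Rightarrow> nat) \<Rightarrow> bool" where
  "multigraph V m \<longleftrightarrow> finite V \<and> (\<forall>u v. m u v = m v u) \<and> (\<forall>v. m v v = 0)
     \<and> (\<forall>u v. m u v > 0 \<longrightarrow> u \<in> V \<and> v \<in> V)"

definition edge_degree :: "'a set \<Rightarrow> ('a \<Rightarrow> 'a \<Rightarrow> nat) \<Rightarrow> 'a \<Rightarrow> nat" where
  "edge_degree V m v = (\<Sum>u\<in>V. m v u)"

definition neighbors :: "'a set \<Rightarrow> ('a \<Rightarrow> 'a \<Rightarrow> nat) \<Rightarrow> 'a \<Rightarrow> 'a set" where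
  "neighbors V m v = {u \<in> V. m v u > 0}"

definition independent_set :: "('a \<Rightarrow> 'a \<Rightarrow> nat) \<Rightarrow> 'a set \<Rightarrow> bool" where
  "independent_set m S \<longleftrightarrow> (\<forall>u\<in>S. \<forall>v\<in>S. m u v = 0)"

definition induces_connected :: "('a \<Rightarrow> 'a \<Rightarrow> nat) \<Rightarrow> 'a set \<Rightarrow> bool" where
  "induces_connected m X \<longleftrightarrow>
     (\<forall>x\<in>X. \<forall>y\<in>X. (x, y) \<in> {(u, v). u \<in> X \<and> v \<in> X \<and> m u v > 0}\<^sup>*)"

definition cluster_collection :: "'a set \<Rightarrow> ('a \<Rightarrow> 'a \<Rightarrow> nat) \<Rightarrow> 'a set set \<Rightarrow> bool" where
  "cluster_collection V m \<C> \<longleftrightarrow> \<C> \<noteq> {} \<and>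
     (\<forall>X\<in>\<C>. X \<noteq> {} \<and> X \<subseteq> V \<and> induces_connected m X) \<and>
     (\<forall>X\<in>\<C>. \<forall>Y\<in>\<C>. X \<noteq> Y \<longrightarrow> X \<inter> Y = {})"

text \<open>The contracted multigraph Z/C: vertex set C, multiplicity between distinct
  clusters X, Y is the number of edges of Z between X and Y; loops deleted.\<close>
definition contract_mult :: "('a \<Rightarrow> 'a \<Rightarrow> nat) \<Rightarrow> 'a set \<Rightarrow> 'a set \<Rightarrow> nat" where
  "contract_mult m X Y = (if X = Y then 0 else (\<Sum>x\<in>X. \<Sum>y\<in>Y. m x y))"

end

(*
  Assign the vertices of B greedily to adjacent vertices of A so that every vertex
  of A receives at most k of them and an unassigned vertex of B sees only vertices
  of A that already received k.  The cluster of a \<in> A is a together with its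
  assigned set S.  Each vertex of S has a second neighbour in A, hence an edge to
  another cluster, so in Z/C the cluster of a has degree at least d + |S|, where d
  counts the edges from a to the other clusters.  If |S| = k this is at least k.
  Otherwise every neighbour of a lies in some cluster, and a has fewer than c edges
  to each vertex of S, so k \<le> deg a \<le> d + c |S| \<le> c (d + |S|).
*)
theory Submission
  imports Defs
begin

definition capacitated_assignment ::
    "('b \<Rightarrow> 'a \<Rightarrow> bool) \<Rightarrow> nat \<Rightarrow> 'b set \<Rightarrow> ('b \<Rightarrow> 'a option) \<Rightarrow> bool" where
  "capacitated_assignment adj k F f \<longleftrightarrow>
     (\<forall>b a. f b = Some a \<longrightarrow> b \<in> F \<and> adj b a)
     \<and> (\<forall>a. card {b\<in>F. f b = Some a} \<le> k)
     \<and> (\<forall>b\<in>F. \<forall>a. f b = None \<longrightarrow> adj b a \<longrightarrow> card {b\<in>F. f b = Some a} = k)"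

lemma capacitated_assignment_insert_assign:
  assumes f: "capacitated_assignment adj k F f" and "finite F" "x \<notin> F"
    and a0: "adj x a0" "card {b\<in>F. f b = Some a0} < k"
  shows "capacitated_assignment adj k (insert x F) (f(x := Some a0))"
proof -
  let ?g = "f(x := Some a0)"
  have "{b\<in>insert x F. ?g b = Some a} =
      (if a = a0 then insert x {b\<in>F. f b = Some a} else {b\<in>F. f b = Some a})" for a
    using \<open>x \<notin> F\<close> by auto
  then have load_g: "card {b\<in>insert x F. ?g b = Some a} =
      (if a = a0 then Suc (card {b\<in>F. f b = Some a}) else card {b\<in>F. f b = Some a})" for a
    using \<open>finite F\<close> \<open>x \<notin> F\<close> by simp
  have saturated: "card {b\<in>insert x F. ?g b = Some a} = k"
    if "b \<in> insert x F" "?g b = None" "adj b a" for b a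
  proof -
    from that have "b \<in> F" "f b = None"
      by (auto split: if_splits)
    then have "card {b\<in>F. f b = Some a} = k"
      using f \<open>adj b a\<close> unfolding capacitated_assignment_def by blast
    then show ?thesis
      using load_g[of a] a0(2) by auto
  qed
  show ?thesis
    using f a0 load_g saturated unfolding capacitated_assignment_def
    by (auto simp: Suc_leI)
qed

lemma capacitated_assignment_insert_skip:
  assumes f: "capacitated_assignment adj k F f" and "x \<notin> F"
    and full: "\<forall>a. adj x a \<longrightarrow> k \<le> card {b\<in>F. f b = Some a}"
  shows "capacitated_assignment adj k (insert x F) f"
proof -
  have "f x = None"
    using f \<open>x \<notin> F\<close> unfolding capacitated_assignment_def by (cases "f x") auto
  then have "{b\<in>insert x F. f b = Some a} = {b\<in>F. f b = Some a}" for a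
    by auto
  then show ?thesis
    using f full unfolding capacitated_assignment_def by (auto intro: le_antisym)
qed

lemma capacitated_assignment_exists:
  assumes "finite F"
  shows "\<exists>f. capacitated_assignment adj k F f"
  using assms
proof (induction F rule: finite_induct)
  case empty
  show ?case
    by (rule exI[of _ "\<lambda>_. None"]) (simp add: capacitated_assignment_def)
next
  case (insert x F)
  then obtain f where "capacitated_assignment adj k F f"
    by blast
  then show ?case
    using capacitated_assignment_insert_assign[OF _ insert.hyps]
      capacitated_assignment_insert_skip[OF _ insert.hyps(2)]
    by (meson not_less)
qed

lemma induces_connected_star:
  assumes sym: "\<And>u v. m u v = m v u" and center: "\<forall>x\<in>S. 0 < m a x"
  shows "induces_connected m (insert a S)"
proof -
  let ?R = "{(u, v). u \<in> insert a S \<and> v \<in> insert a S \<and> 0 < m u v}"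
  have from_center: "(a, x) \<in> ?R\<^sup>*" if "x \<in> insert a S" for x
    using that center by (cases "x = a") auto
  have to_center: "(x, a) \<in> ?R\<^sup>*" if "x \<in> insert a S" for x
    using that center sym[of x a] by (cases "x = a") auto
  show ?thesis
    unfolding induces_connected_def by (blast intro: rtrancl_trans to_center from_center)
qed

lemma edge_degree_contract:
  assumes "cluster_collection V m \<C>" "finite V" "X \<in> \<C>"
  shows "edge_degree \<C> (contract_mult m) X = (\<Sum>x\<in>X. \<Sum>y\<in>\<Union>\<C> - X. m x y)"
proof -
  have "\<forall>Y\<in>\<C>. Y \<subseteq> V"
    and disj: "\<forall>Y\<in>\<C>. \<forall>Z\<in>\<C>. Y \<noteq> Z \<longrightarrow> Y \<inter> Z = {}"
    using assms(1) unfolding cluster_collection_def by auto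
  then have fin: "finite \<C>" "\<forall>Y\<in>\<C>. finite Y"
    using \<open>finite V\<close> by (auto intro: finite_subset[of \<C> "Pow V"] finite_subset)
  have rest: "\<Union>\<C> - X = \<Union>(\<C> - {X})"
    using disj \<open>X \<in> \<C>\<close> by blast
  have "edge_degree \<C> (contract_mult m) X = (\<Sum>Y\<in>\<C> - {X}. contract_mult m X Y)"
    unfolding edge_degree_def
    using sum.remove[OF fin(1) \<open>X \<in> \<C>\<close>, of "contract_mult m X"]
    by (simp add: contract_mult_def[of m X X])
  also have "\<dots> = (\<Sum>Y\<in>\<C> - {X}. \<Sum>x\<in>X. \<Sum>y\<in>Y. m x y)"
    by (rule sum.cong) (auto simp: contract_mult_def)
  also have "\<dots> = (\<Sum>x\<in>X. \<Sum>Y\<in>\<C> - {X}. \<Sum>y\<in>Y. m x y)"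
    by (rule sum.swap)
  also have "\<dots> = (\<Sum>x\<in>X. \<Sum>y\<in>\<Union>\<C> - X. m x y)"
    unfolding rest using fin disj by (simp add: sum.Union_disjoint)
  finally show ?thesis .
qed

locale greedy_clustering =
  fixes V :: "'a set" and m :: "'a \<Rightarrow> 'a \<Rightarrow> nat" and c k :: nat and A B :: "'a set"
    and f :: "'a \<Rightarrow> 'a option"
  assumes multigraph: "multigraph V m"
    and nonempty: "V \<noteq> {}"
    and mult_less: "\<forall>u v. m u v < c"
    and partition: "A \<union> B = V" "A \<inter> B = {}"
    and degree_A: "\<forall>a\<in>A. edge_degree V m a \<ge> k"
    and independent_B: "independent_set m B"
    and neighbors_B: "\<forall>b\<in>B. card (neighbors V m b) \<ge> 2"
    and capacitated: "capacitated_assignment (\<lambda>b a. a \<in> A \<and> 0 < m b a) k B f"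
begin

definition assigned :: "'a \<Rightarrow> 'a set" where
  "assigned a = {b\<in>B. f b = Some a}"

definition cluster :: "'a \<Rightarrow> 'a set" where
  "cluster a = insert a (assigned a)"

definition clusters :: "'a set set" where
  "clusters = cluster ` A"

definition outside :: "'a \<Rightarrow> 'a set" where
  "outside a = \<Union>clusters - cluster a"

definition weight :: "'a \<Rightarrow> nat" where
  "weight a = (\<Sum>y\<in>outside a. m a y) + card (assigned a)"

lemma assignment: "\<forall>b a. f b = Some a \<longrightarrow> b \<in> B \<and> a \<in> A \<and> 0 < m b a"
  and capacity: "\<forall>a. card {b\<in>B. f b = Some a} \<le> k"
  and saturation:
    "\<forall>b\<in>B. \<forall>a. f b = None \<longrightarrow> a \<in> A \<and> 0 < m b a \<longrightarrow> card {b\<in>B. f b = Some a} = k"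
  using capacitated unfolding capacitated_assignment_def by auto

lemma finite_V: "finite V"
  and mult_sym: "m u v = m v u"
  and mult_loop: "m v v = 0"
  and mult_support: "0 < m u v \<Longrightarrow> u \<in> V \<and> v \<in> V"
  using multigraph unfolding multigraph_def by auto

lemma assigned_subset_B: "assigned a \<subseteq> B"
  unfolding assigned_def by auto

lemma finite_assigned: "finite (assigned a)"
  using assigned_subset_B finite_V partition(1) by (blast intro: finite_subset)

lemma cluster_subset_V: "a \<in> A \<Longrightarrow> cluster a \<subseteq> V"
  using partition(1) assigned_subset_B unfolding cluster_def by blast

lemma center_notin_assigned: "a' \<in> A \<Longrightarrow> a' \<notin> assigned a"
  using assigned_subset_B partition(2) by blast

lemma mult_assigned: "b \<in> assigned a \<Longrightarrow> 0 < m a b"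
  using assignment mult_sym[of a b] unfolding assigned_def by auto

lemma center_in_cluster_iff: "a \<in> A \<Longrightarrow> a \<in> cluster a' \<longleftrightarrow> a = a'"
  using center_notin_assigned unfolding cluster_def by auto

lemma clusters_disjoint:
  "a \<in> A \<Longrightarrow> a' \<in> A \<Longrightarrow> a \<noteq> a' \<Longrightarrow> cluster a \<inter> cluster a' = {}"
  using center_notin_assigned unfolding cluster_def assigned_def by auto

lemma other_neighbor:
  assumes "b \<in> B"
  shows "\<exists>a'\<in>A. a' \<noteq> a \<and> 0 < m b a'"
proof -
  have "\<not> neighbors V m b \<subseteq> {a}"
    using neighbors_B \<open>b \<in> B\<close> card_mono[of "{a}" "neighbors V m b"] by fastforce
  then obtain a' where "a' \<in> V" "0 < m b a'" "a' \<noteq> a"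
    unfolding neighbors_def by auto
  moreover have "a' \<notin> B"
    using independent_B \<open>b \<in> B\<close> \<open>0 < m b a'\<close> unfolding independent_set_def by auto
  ultimately show ?thesis
    using partition(1) by blast
qed

lemma cluster_collection: "cluster_collection V m clusters"
proof -
  obtain v where "v \<in> V"
    using nonempty by blast
  then have "A \<noteq> {}"
    using partition(1) other_neighbor[of v v] by blast
  moreover have "cluster a \<noteq> {} \<and> cluster a \<subseteq> V \<and> induces_connected m (cluster a)"
    if "a \<in> A" for a
  proof -
    have "induces_connected m (insert a (assigned a))"
      using mult_assigned by (blast intro: induces_connected_star mult_sym)
    then show ?thesis
      using cluster_subset_V[OF that] unfolding cluster_def by auto
  qed
  moreover have "cluster a \<inter> cluster a' = {}"
    if "a \<in> A" "a' \<in> A" "cluster a \<noteq> cluster a'" for a a'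
    using that clusters_disjoint by blast
  ultimately show ?thesis
    unfolding cluster_collection_def clusters_def by auto
qed

lemma unique_cluster: "a \<in> A \<Longrightarrow> \<exists>!X. X \<in> clusters \<and> a \<in> X"
  using center_in_cluster_iff unfolding clusters_def by auto

lemma card_cluster: "card (cluster a) \<le> k + 1"
proof -
  have "card (cluster a) \<le> Suc (card (assigned a))"
    unfolding cluster_def using finite_assigned by (simp add: card_insert_if)
  then show ?thesis
    using capacity unfolding assigned_def by (metis Suc_eq_plus1 add_le_mono1 le_trans)
qed

lemma mem_outside:
  assumes "a \<in> A" "a' \<in> A" "a' \<noteq> a" "y \<in> cluster a'"
  shows "y \<in> outside a"
proof -
  have "y \<in> \<Union>clusters"
    using assms(2,4) unfolding clusters_def by blast
  moreover have "y \<notin> cluster a"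
    using clusters_disjoint[OF assms(2,1,3)] assms(4) by blast
  ultimately show ?thesis
    unfolding outside_def by blast
qed

lemma outside_subset_V: "outside a \<subseteq> V"
  using cluster_subset_V unfolding outside_def clusters_def by blast

lemma assigned_outside_disjoint: "outside a \<inter> assigned a = {}"
  unfolding outside_def cluster_def by blast

lemma weight_le_edge_degree_cluster:
  assumes "a \<in> A"
  shows "weight a \<le> edge_degree clusters (contract_mult m) (cluster a)"
proof -
  have finite_outside: "finite (outside a)"
    using outside_subset_V finite_V by (rule finite_subset)
  have "card (assigned a) \<le> (\<Sum>b\<in>assigned a. \<Sum>y\<in>outside a. m b y)"
  proof -
    have "1 \<le> (\<Sum>y\<in>outside a. m b y)" if b: "b \<in> assigned a" for b
    proof -
      obtain a' where "a' \<in> A" "a' \<noteq> a" "0 < m b a'"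
        using other_neighbor assigned_subset_B b by blast
      moreover from this have "a' \<in> outside a"
        using mem_outside[OF assms] unfolding cluster_def by blast
      ultimately show ?thesis
        using member_le_sum[OF _ _ finite_outside, of a' "m b"] by simp
    qed
    then have "(\<Sum>b\<in>assigned a. 1) \<le> (\<Sum>b\<in>assigned a. \<Sum>y\<in>outside a. m b y)"
      by (rule sum_mono)
    then show ?thesis
      by simp
  qed
  moreover have "edge_degree clusters (contract_mult m) (cluster a)
      = (\<Sum>y\<in>outside a. m a y) + (\<Sum>b\<in>assigned a. \<Sum>y\<in>outside a. m b y)"
  proof -
    have "edge_degree clusters (contract_mult m) (cluster a)
        = (\<Sum>x\<in>cluster a. \<Sum>y\<in>outside a. m x y)"
      using edge_degree_contract[OF cluster_collection finite_V] assms
      unfolding outside_def clusters_def by simp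
    then show ?thesis
      unfolding cluster_def using finite_assigned center_notin_assigned[OF assms] by simp
  qed
  ultimately show ?thesis
    unfolding weight_def by simp
qed

lemma unsaturated_neighbor:
  assumes "a \<in> A" "card (assigned a) < k" "0 < m a y"
  shows "y \<in> outside a \<union> assigned a"
proof (cases "y \<in> A")
  case True
  moreover have "y \<noteq> a"
    using assms(3) mult_loop by auto
  ultimately show ?thesis
    using mem_outside[OF assms(1)] unfolding cluster_def by blast
next
  case False
  then have "y \<in> B"
    using assms(3) mult_support partition(1) by blast
  moreover have "f y \<noteq> None"
    using saturation \<open>y \<in> B\<close> assms mult_sym[of a y] unfolding assigned_def by fastforce
  then obtain a' where "f y = Some a'"
    by blast
  ultimately show ?thesis
    using assignment mem_outside[OF assms(1)] unfolding assigned_def cluster_def by blast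
qed

lemma c_pos: "0 < c"
  using mult_less by (metis gr_zeroI not_less0)

lemma le_mult_c: "n \<le> c * n"
  using c_pos by simp

lemma k_le_c_times_weight:
  assumes "a \<in> A"
  shows "k \<le> c * weight a"
proof (cases "card (assigned a) < k")
  case True
  have "k \<le> (\<Sum>y\<in>V. m a y)"
    using degree_A assms unfolding edge_degree_def by blast
  also have "\<dots> = (\<Sum>y\<in>outside a \<union> assigned a. m a y)"
    using finite_V outside_subset_V cluster_subset_V[OF assms]
      unsaturated_neighbor[OF assms True]
    by (intro sum.mono_neutral_right) (auto simp: cluster_def)
  also have "\<dots> = (\<Sum>y\<in>outside a. m a y) + (\<Sum>y\<in>assigned a. m a y)"
    using finite_V outside_subset_V finite_assigned assigned_outside_disjoint
    by (intro sum.union_disjoint) (auto intro: finite_subset)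
  also have "(\<Sum>y\<in>assigned a. m a y) \<le> c * card (assigned a)"
    using sum_bounded_above[of "assigned a" "m a" c] mult_less less_imp_le
    by (auto simp: mult.commute)
  also have "(\<Sum>y\<in>outside a. m a y) \<le> c * (\<Sum>y\<in>outside a. m a y)"
    by (rule le_mult_c)
  finally show ?thesis
    unfolding weight_def by (simp add: add_mult_distrib2)
next
  case False
  then have "k \<le> weight a"
    unfolding weight_def by simp
  also have "\<dots> \<le> c * weight a"
    by (rule le_mult_c)
  finally show ?thesis .
qed

lemma k_div_c_le_edge_degree_cluster:
  assumes "X \<in> clusters"
  shows "real k / real c \<le> real (edge_degree clusters (contract_mult m) X)"
proof -
  obtain a where "a \<in> A" "X = cluster a"
    using assms unfolding clusters_def by blast
  then have "k \<le> c * edge_degree clusters (contract_mult m) X"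
    using k_le_c_times_weight[of a] weight_le_edge_degree_cluster[of a]
    by (blast intro: mult_le_mono2 le_trans)
  then have "real k \<le> real c * real (edge_degree clusters (contract_mult m) X)"
    by (simp flip: of_nat_mult)
  then show ?thesis
    using c_pos by (simp add: divide_le_eq mult.commute)
qed

end

theorem lemma1:
  fixes V :: "'a set" and m :: "'a \<Rightarrow> 'a \<Rightarrow> nat" and c k :: nat and A B :: "'a set"
  assumes "multigraph V m"
    and "V \<noteq> {}"
    and "c > 0" and "k > 0"
    and "\<forall>u v. m u v < c"
    and "A \<union> B = V" and "A \<inter> B = {}"
    and "\<forall>a\<in>A. edge_degree V m a \<ge> k"
    and "independent_set m B"
    and "\<forall>b\<in>B. card (neighbors V m b) \<ge> 2"
  shows "\<exists>\<C>. cluster_collection V m \<C>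
            \<and> (\<forall>a\<in>A. \<exists>!X. X \<in> \<C> \<and> a \<in> X)
            \<and> (\<forall>X\<in>\<C>. card X \<le> k + 1)
            \<and> (\<forall>X\<in>\<C>. real (edge_degree \<C> (contract_mult m) X) \<ge> real k / real c)"
proof -
  have "finite B"
    using assms(1,6) unfolding multigraph_def by auto
  then obtain f where "capacitated_assignment (\<lambda>b a. a \<in> A \<and> 0 < m b a) k B f"
    using capacitated_assignment_exists by blast
  then interpret greedy_clustering V m c k A B f
    using assms(1,2,5-10) by unfold_locales
  show ?thesis
  proof (intro exI[of _ clusters] conjI ballI)
    show "cluster_collection V m clusters"
      by (rule cluster_collection)
    show "\<exists>!X. X \<in> clusters \<and> a \<in> X" if "a \<in> A" for a
      using that by (rule unique_cluster)
    show "card X \<le> k + 1" if "X \<in> clusters" for X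
      using that card_cluster unfolding clusters_def by blast
    show "real k / real c \<le> real (edge_degree clusters (contract_mult m) X)"
      if "X \<in> clusters" for X
      using that by (rule k_div_c_le_edge_degree_cluster)
  qed
qed

end
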